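(* Let $v>0$, $N\ge2$, and consider the Becker–Döring coagulation process $CP(N)$ with rates $\psi(1,1)=2v$, $\psi(i,1)=\psi(1,i)=iv$ for $i>1$, and $\psi(i,j)=0$ if $\min\{i,j\}>1$, started from $(N,0,\dots,0)$. Then its distribution is Gibbsian, $\mathbb P(X_N^{(\rho)}(t)=\eta)=N!\prod_{k=1}^N a_{k,N}(t)^{n_k}/n_k!$, with $$a_{k,N}(t)=\sum_{i=0}^k m_{i,k}\,e^{-i(N-1)vt},\qquad k=1,\dots,N,\ t\ge0,$$ where $m_{k-1,k}=0$ for $k\ge1$, $m_{k,k}=\dfrac{(-1)^{k-1}}{k(N-1)^{k-1}}$ for $k\ge1$, and $m_{i,k}=\dfrac{(-1)^i(k-1)!}{i!\,(N-1)^{k-1}(k-i)(k-i-2)!}$ for $0\le i\le k-2$. Equivalently the coefficients satisfy $m_{0,1}=0$, $m_{1,1}=1$, $m_{i,k}=-\frac{(k-1)m_{i-1,k-1}}{i(N-1)}$ for $1\le i\le k$, $k\ge2$, and $m_{0,k}=-\sum_{i=1}^k m_{i,k}$.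
   Context: $CP(N)$ is the continuous-time Markov chain on partitions $\eta=(n_1,\dots,n_N)$ of $N$ ($n_k$ = number of clusters of size $k$, $\sum kn_k=N$) in which any two distinct clusters of sizes $i,j$ merge into one of size $i+j$ at rate $\psi(i,j)$; the transition $\eta\to\eta^{(i,j)}$ has rate $n_in_j\psi(i,j)$ for $i\ne j$ and $\frac{n_i(n_i-1)}2\psi(i,i)$ for $i=j$. These rates are of the form $\psi(i,j)=if(j)+jf(i)$ with $f(1)=v$, $f(i)=0$ for $i>1$. *)

theory Defs
  imports "HOL-Analysis.Analysis"
begin

text \<open>A partition eta of N is encoded as eta :: nat => nat, eta k = n_k = number
of clusters of size k; n_k = 0 outside 1..N and sum k*n_k = N.\<close>
definition partitions :: "nat \<Rightarrow> (nat \<Rightarrow> nat) set" where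
  "partitions N = {eta. (\<forall>k. eta k \<noteq> 0 \<longrightarrow> 1 \<le> k \<and> k \<le> N) \<and> (\<Sum>k=1..N. k * eta k) = N}"

definition merge :: "nat \<Rightarrow> nat \<Rightarrow> (nat \<Rightarrow> nat) \<Rightarrow> (nat \<Rightarrow> nat)" where
  "merge i j eta = (\<lambda>k. eta k - (if k = i then 1 else 0) - (if k = j then 1 else 0)
                       + (if k = i + j then 1 else 0))"

text \<open>Rate of the transition eta -> eta^(i,j) (unordered pair, i <= j).\<close>
definition trans_rate :: "(nat \<Rightarrow> nat \<Rightarrow> real) \<Rightarrow> nat \<Rightarrow> nat \<Rightarrow> (nat \<Rightarrow> nat) \<Rightarrow> real" where
  "trans_rate psi i j eta =
     (if i = j then real (eta i) * (real (eta i) - 1) / 2 * psi i i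
      else real (eta i) * real (eta j) * psi i j)"

definition forward_rhs :: "nat \<Rightarrow> (nat \<Rightarrow> nat \<Rightarrow> real) \<Rightarrow> ((nat \<Rightarrow> nat) \<Rightarrow> real) \<Rightarrow> (nat \<Rightarrow> nat) \<Rightarrow> real" where
  "forward_rhs N psi q eta =
     (\<Sum>xi\<in>partitions N. \<Sum>i\<in>{1..N}. \<Sum>j\<in>{i..N}.
        (if merge i j xi = eta then trans_rate psi i j xi * q xi else 0))
   - (\<Sum>i\<in>{1..N}. \<Sum>j\<in>{i..N}. trans_rate psi i j eta) * q eta"

text \<open>p : time -> state -> probability is the law of CP(N) started from (N,0,...,0):
the (unique, finite state space) solution of the forward equation with that initial law.\<close>
definition is_CP_law :: "nat \<Rightarrow> (nat \<Rightarrow> nat \<Rightarrow> real) \<Rightarrow> (real \<Rightarrow> (nat \<Rightarrow> nat) \<Rightarrow> real) \<Rightarrow> bool" where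
  "is_CP_law N psi p \<longleftrightarrow>
     (\<forall>eta\<in>partitions N. p 0 eta = (if eta = (\<lambda>k. if k = 1 then N else 0) then 1 else 0)) \<and>
     (\<forall>eta\<in>partitions N. \<forall>t\<ge>0.
        ((\<lambda>s. p s eta) has_real_derivative forward_rhs N psi (p t) eta) (at t within {0..}))"

definition psi_BD :: "real \<Rightarrow> nat \<Rightarrow> nat \<Rightarrow> real" where
  "psi_BD v i j = (if i = 1 \<and> j = 1 then 2 * v
                   else if j = 1 then real i * v
                   else if i = 1 then real j * v else 0)"

definition mcoef :: "nat \<Rightarrow> nat \<Rightarrow> nat \<Rightarrow> real" where
  "mcoef N i k =
    (if i = k then (-1) ^ (k - 1) / (real k * (real N - 1) ^ (k - 1))
     else if i + 1 = k then 0
     else if i + 2 \<le> k then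
       (-1) ^ i * fact (k - 1) /
         (fact i * (real N - 1) ^ (k - 1) * real (k - i) * fact (k - i - 2))
     else 0)"

definition acoef :: "nat \<Rightarrow> real \<Rightarrow> nat \<Rightarrow> real \<Rightarrow> real" where
  "acoef N v k t = (\<Sum>i=0..k. mcoef N i k * exp (- real i * (real N - 1) * v * t))"

end

theory Submission
  imports Defs
begin

(* Write W_a(eta) = prod_k a_k^{n_k} / n_k! for amplitudes a = (a_1,...,a_N).  The proof
   has three parts.
   1. Coefficients: the numbers m_{i,k} have the closed form
        (N-1)^(k-1) m_{i,k} = (-1)^i (k-1-i) binom(k,i) / k,
      which yields their recursion and the vanishing of sum_i m_{i,k} (k >= 2).  Hence the
      amplitudes a_{k,N}(t) satisfy a_{k,N}(0) = [k = 1] and the Becker--Doering system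
      a_1' = -(N-1) v a_1,  a_k' = (k-1) v a_1 a_{k-1}.
   2. Gibbs ansatz: for any amplitudes, the right-hand side of the forward equation at W_a
      equals sum_k a'_k W_a(eta - e_k) with a' given by the Becker--Doering field.  This uses
      that under Becker--Doering rates each state eta is entered through a (1,j)-merge from a
      unique predecessor.  By the product rule, N! W_{a(t)} therefore solves the forward
      equation, and it starts at the point mass on (N,0,...,0).
   3. Uniqueness: solutions of a finite linear ODE system on [0, oo) are determined by their
      initial value (Gronwall argument on the squared distance), so the law equals N! W_{a(t)}. *)

lemma mcoef_closed_form:
  assumes "1 \<le> k" and "i \<le> k"
  shows "mcoef N i k = (-1)^i * (real k - 1 - real i) * real (k choose i)
                         / (real k * (real N - 1)^(k - 1))"
proof -
  consider "i = k" | "i + 1 = k" | "i + 2 \<le> k" using assms(2) by linarith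
  then show ?thesis
  proof cases
    case 1
    with assms(1) show ?thesis
      by (cases k) (simp_all add: mcoef_def)
  next
    case 2
    then show ?thesis by (auto simp: mcoef_def)
  next
    case 3
    define d where "d = real (k - i)"
    have d: "d > 1" using 3 by (simp add: d_def)
    have fk: "fact k = real k * fact (k - 1)"
      using assms(1) by (intro fact_reduce) simp
    have fki: "fact (k - i) = d * (d - 1) * (fact (k - i - 2) :: real)"
    proof -
      define m where "m = k - i - 2"
      have m: "k - i = Suc (Suc m)" using 3 by (simp add: m_def)
      show ?thesis unfolding d_def m by (simp add: algebra_simps m_def)
    qed
    have ch: "real (k choose i) = fact k / (fact i * fact (k - i))"
      using assms(2) by (rule binomial_fact)
    have r: "real k - 1 - real i = d - 1" using 3 by (simp add: d_def)
    have alg: "s * F / (A * X * d * G) = s * (d - 1) * (K * F / (A * (d * (d - 1) * G))) / (K * X)"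
      if "A > 0" "G > 0" "K > 0" for s F A X G K :: real
      using that d by (simp add: divide_simps)
    show ?thesis using 3 assms(1) d
      unfolding mcoef_def ch fki fk r by (simp add: alg flip: d_def)
  qed
qed

(* The recursion m_{i,k} = -(k-1) m_{i-1,k-1} / (i (N-1)), via i binom(k,i) = k binom(k-1,i-1). *)
lemma mcoef_recursion:
  assumes "2 \<le> k" and "1 \<le> i" and "i \<le> k"
  shows "mcoef N i k = - (real (k - 1) * mcoef N (i - 1) (k - 1)) / (real i * (real N - 1))"
proof -
  obtain j l where i: "i = Suc j" and k: "k = Suc (Suc l)"
    using assms by (metis Suc_le_D not_one_le_zero neq0_conv Suc_pred add_2_eq_Suc le_Suc_ex)
  define x where "x = real N - 1"
  have absorb: "real (Suc j) * real (Suc (Suc l) choose Suc j) = real (Suc (Suc l)) * real (Suc l choose j)"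
    by (metis Suc_times_binomial_eq mult.commute of_nat_mult)
  have shift: "real (Suc (Suc l)) - 1 - real (Suc j) = real (Suc l) - 1 - real j"
    by simp
  have alg: "(-1 * s) * r * C / (K * (x * X)) = - (L * (s * r * B / (L * X))) / (I * x)"
    if "I * C = K * B" "I > 0" "K > 0" "L > 0" for s r C B K L I X :: real
    using that by (cases "x = 0"; cases "X = 0") (simp_all add: field_simps)
  have "mcoef N i k = (-1)^Suc j * (real (Suc (Suc l)) - 1 - real (Suc j)) * real (Suc (Suc l) choose Suc j)
                       / (real (Suc (Suc l)) * (x * x ^ l))"
    using assms(3) unfolding i k x_def by (subst mcoef_closed_form) simp_all
  also have "\<dots> = - (real (Suc l) * ((-1)^j * (real (Suc l) - 1 - real j) * real (Suc l choose j)
                       / (real (Suc l) * x ^ l))) / (real (Suc j) * x)"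
    unfolding power_Suc shift by (rule alg) (use absorb in simp_all)
  also have "\<dots> = - (real (k - 1) * mcoef N (i - 1) (k - 1)) / (real i * (real N - 1))"
    using assms(3) unfolding i k x_def by (simp add: mcoef_closed_form[of "Suc l" j])
  finally show ?thesis .
qed

(* For k >= 2 the coefficients sum to zero: by the closed form this is
   (k-1) sum (-1)^i binom(k,i) - sum (-1)^i i binom(k,i) = 0. *)
lemma mcoef_sum_zero:
  assumes "2 \<le> k"
  shows "(\<Sum>i=0..k. mcoef N i k) = 0"
proof -
  define c where "c = 1 / (real k * (real N - 1)^(k - 1))"
  have "(\<Sum>i=0..k. mcoef N i k) = c * (\<Sum>i\<le>k. (-1)^i * (real k - 1 - real i) * real (k choose i))"
    using assms by (simp add: atLeast0AtMost sum_distrib_left c_def mcoef_closed_form)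
  also have "(\<Sum>i\<le>k. (-1)^i * (real k - 1 - real i) * real (k choose i))
      = (real k - 1) * (\<Sum>i\<le>k. (-1)^i * real (k choose i)) - (\<Sum>i\<le>k. (-1)^i * real i * real (k choose i))"
    unfolding sum_distrib_left sum_subtractf[symmetric] by (rule sum.cong) (simp_all add: algebra_simps)
  also have "\<dots> = 0"
    using assms by (simp add: choose_alternating_sum choose_alternating_linear_sum)
  finally show ?thesis by simp
qed

lemma acoef_one: "acoef N v 1 t = exp (- (real N - 1) * v * t)"
  by (simp add: acoef_def mcoef_def algebra_simps)

lemma acoef_at_zero: "2 \<le> k \<Longrightarrow> acoef N v k 0 = 0"
  by (simp add: acoef_def mcoef_sum_zero)

definition bd_field :: "nat \<Rightarrow> real \<Rightarrow> (nat \<Rightarrow> real) \<Rightarrow> nat \<Rightarrow> real" where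
  "bd_field N v a k =
     (if k = 1 then - (real N - 1) * v * a 1 else real (k - 1) * v * a 1 * a (k - 1))"

(* The amplitudes a_{k,N} solve the Becker--Doering system; for k >= 2 this is
   the coefficient recursion read off term by term. *)
lemma acoef_has_derivative:
  assumes "2 \<le> N" and "1 \<le> k"
  shows "((\<lambda>t. acoef N v k t) has_real_derivative bd_field N v (\<lambda>l. acoef N v l t) k) (at t within S)"
proof (cases "k = 1")
  case True
  have "acoef N v k = (\<lambda>t. exp (- (real N - 1) * v * t))"
    unfolding True by (rule ext, rule acoef_one)
  with True show ?thesis
    unfolding bd_field_def by (auto intro!: derivative_eq_intros simp: acoef_one)
next
  case False
  then obtain l where k: "k = Suc l" and l: "1 \<le> l" using assms(2) by (cases k) auto
  define e where "e i = exp (- real i * (real N - 1) * v * t)" for i :: nat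
  have e_Suc: "e (Suc i) = e 1 * e i" for i
    unfolding e_def by (simp add: algebra_simps flip: exp_add)
  have "((\<lambda>t. acoef N v k t) has_real_derivative
          (\<Sum>i=0..k. mcoef N i k * (- real i * (real N - 1) * v * e i))) (at t within S)"
    unfolding acoef_def e_def by (auto intro!: derivative_eq_intros simp: algebra_simps)
  also have "(\<Sum>i=0..k. mcoef N i k * (- real i * (real N - 1) * v * e i))
      = (\<Sum>i=0..l. mcoef N (Suc i) k * (- real (Suc i) * (real N - 1) * v * e (Suc i)))"
    unfolding k by (subst sum.atLeast0_atMost_Suc_shift) (simp add: algebra_simps)
  also have "\<dots> = (\<Sum>i=0..l. real l * v * e 1 * (mcoef N i l * e i))"
  proof (rule sum.cong[OF refl])
    fix i assume "i \<in> {0..l}"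
    then have rec: "mcoef N (Suc i) k = - (real l * mcoef N i l) / (real (Suc i) * (real N - 1))"
      using mcoef_recursion[of k "Suc i" N] k l by simp
    have alg: "- (L * m) / (I * x) * (- I * x * v * (E1 * Ei)) = L * v * E1 * (m * Ei)"
      if "I \<noteq> 0" "x \<noteq> 0" for L m I x E1 Ei :: real
      using that by simp
    show "mcoef N (Suc i) k * (- real (Suc i) * (real N - 1) * v * e (Suc i))
             = real l * v * e 1 * (mcoef N i l * e i)"
      unfolding e_Suc rec by (rule alg) (use assms(1) in simp_all)
  qed
  also have "\<dots> = real l * v * e 1 * acoef N v l t"
    by (simp add: acoef_def e_def sum_distrib_left)
  also have "\<dots> = bd_field N v (\<lambda>l. acoef N v l t) k"
    using False acoef_one[of N v t] by (simp add: bd_field_def k e_def algebra_simps)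
  finally show ?thesis .
qed

definition raise :: "nat \<Rightarrow> (nat \<Rightarrow> nat) \<Rightarrow> (nat \<Rightarrow> nat)" where
  "raise i z = z(i := Suc (z i))"

definition lower :: "nat \<Rightarrow> (nat \<Rightarrow> nat) \<Rightarrow> (nat \<Rightarrow> nat)" where
  "lower i z = z(i := z i - 1)"

lemma raise_lower: "z i \<noteq> 0 \<Longrightarrow> raise i (lower i z) = z"
  by (auto simp: raise_def lower_def fun_eq_iff)

definition gibbs :: "nat \<Rightarrow> (nat \<Rightarrow> real) \<Rightarrow> (nat \<Rightarrow> nat) \<Rightarrow> real" where
  "gibbs N a z = (\<Prod>k=1..N. a k ^ z k / fact (z k))"

lemma gibbs_split:
  assumes "i \<in> {1..N}"
  shows "gibbs N a z = a i ^ z i / fact (z i) * (\<Prod>k\<in>{1..N}-{i}. a k ^ z k / fact (z k))"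
  unfolding gibbs_def using assms by (subst prod.remove[of _ i]) auto

lemma Suc_times_divide_fact: "real (Suc n) * x / fact (Suc n) = x / (fact n :: real)"
  by (simp del: of_nat_Suc)

lemma gibbs_raise:
  assumes "i \<in> {1..N}"
  shows "real (Suc (z i)) * gibbs N a (raise i z) = a i * gibbs N a z"
proof -
  have others: "(\<Prod>k\<in>{1..N}-{i}. a k ^ raise i z k / fact (raise i z k))
              = (\<Prod>k\<in>{1..N}-{i}. a k ^ z k / fact (z k))"
    by (intro prod.cong) (auto simp: raise_def)
  have key: "real (Suc (z i)) * (a i ^ Suc (z i) / fact (Suc (z i))) = a i * (a i ^ z i / fact (z i))"
    unfolding times_divide_eq_right Suc_times_divide_fact by simp
  show ?thesis
    unfolding gibbs_split[OF assms, of _ "raise i z"] gibbs_split[OF assms, of _ z] others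
    by (simp only: raise_def fun_upd_same mult.assoc[symmetric] key)
qed

lemma gibbs_lower:
  assumes "i \<in> {1..N}" and "z i \<noteq> 0"
  shows "real (z i) * gibbs N a z = a i * gibbs N a (lower i z)"
proof -
  have "Suc (lower i z i) = z i" using assms(2) by (simp add: lower_def)
  then show ?thesis
    using gibbs_raise[OF assms(1), of "lower i z" a] by (simp add: raise_lower assms(2))
qed

lemma gibbs_has_derivative:
  assumes "\<And>k. k \<in> {1..N} \<Longrightarrow> ((\<lambda>t. a t k) has_real_derivative a' k) (at t)"
  shows "((\<lambda>t. gibbs N (a t) z) has_real_derivative
           (\<Sum>k=1..N. if z k = 0 then 0 else a' k * gibbs N (a t) (lower k z))) (at t)"
proof -
  define f where "f k s = a s k ^ z k / fact (z k)" for k s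
  have "((\<lambda>s. \<Prod>k=1..N. f k s) has_real_derivative
          (\<Sum>k=1..N. real (z k) * (a' k * a t k ^ (z k - 1)) / fact (z k) * (\<Prod>l\<in>{1..N}-{k}. f l t))) (at t)"
    unfolding f_def
    by (intro has_field_derivative_prod DERIV_cdivide) (auto intro!: derivative_eq_intros assms)
  also have "(\<Sum>k=1..N. real (z k) * (a' k * a t k ^ (z k - 1)) / fact (z k) * (\<Prod>l\<in>{1..N}-{k}. f l t))
      = (\<Sum>k=1..N. if z k = 0 then 0 else a' k * gibbs N (a t) (lower k z))"
  proof (rule sum.cong[OF refl])
    fix k assume k: "k \<in> {1..N}"
    have others: "(\<Prod>l\<in>{1..N}-{k}. a t l ^ lower k z l / fact (lower k z l)) = (\<Prod>l\<in>{1..N}-{k}. f l t)"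
      unfolding f_def by (intro prod.cong) (auto simp: lower_def)
    show "real (z k) * (a' k * a t k ^ (z k - 1)) / fact (z k) * (\<Prod>l\<in>{1..N}-{k}. f l t)
        = (if z k = 0 then 0 else a' k * gibbs N (a t) (lower k z))"
    proof (cases "z k")
      case (Suc m)
      then show ?thesis
        unfolding gibbs_split[OF k, of _ "lower k z"] others
        using Suc_times_divide_fact[of m "a' k * a t k ^ m"] by (simp add: lower_def)
    qed simp
  qed
  finally show ?thesis unfolding gibbs_def f_def .
qed

lemma partitions_support: "eta \<in> partitions N \<Longrightarrow> eta k \<noteq> 0 \<Longrightarrow> k \<in> {1..N}"
  unfolding partitions_def by auto

(* The state space is finite: every occupation number is at most N. *)
lemma finite_partitions: "finite (partitions N)"
proof (rule finite_subset)
  show "partitions N \<subseteq> {z. \<forall>k. (k \<in> {1..N} \<longrightarrow> z k \<in> {0..N}) \<and> (k \<notin> {1..N} \<longrightarrow> z k = 0)}"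
  proof safe
    fix z k assume z: "z \<in> partitions N" and k: "k \<in> {1..N}"
    have "z k \<le> k * z k" using k by simp
    also have "\<dots> \<le> (\<Sum>l=1..N. l * z l)" using k by (intro member_le_sum) auto
    finally show "z k \<in> {0..N}" using z by (simp add: partitions_def)
  qed (auto dest: partitions_support)
  show "finite {z. \<forall>k. (k \<in> {1..N} \<longrightarrow> z k \<in> {0..N}) \<and> (k \<notin> {1..N} \<longrightarrow> (z k :: nat) = 0)}"
    by (rule finite_set_of_finite_funs) auto
qed

definition total_mass :: "nat \<Rightarrow> (nat \<Rightarrow> nat) \<Rightarrow> nat" where
  "total_mass N z = (\<Sum>k=1..N. k * z k)"

lemma total_mass_update:
  assumes "i \<in> {1..N}"
  shows "total_mass N (z(i := m)) + i * z i = total_mass N z + i * m"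
proof -
  have split: "total_mass N y = i * y i + (\<Sum>k\<in>{1..N}-{i}. k * y k)" for y
    unfolding total_mass_def using assms by (subst sum.remove[of _ i]) auto
  have "(\<Sum>k\<in>{1..N}-{i}. k * (z(i := m)) k) = (\<Sum>k\<in>{1..N}-{i}. k * z k)"
    by (intro sum.cong) auto
  then show ?thesis unfolding split[of "z(i := m)"] split[of z] by simp
qed

(* Under Becker--Doering rates only monomers attach.  The state from which a monomer
   joining a j-cluster leads to eta: remove a (j+1)-cluster, add a monomer and a j-cluster. *)
definition monomer_pred :: "nat \<Rightarrow> (nat \<Rightarrow> nat) \<Rightarrow> (nat \<Rightarrow> nat)" where
  "monomer_pred j eta = raise j (raise 1 (lower (j + 1) eta))"

lemma merge_monomer_pred:
  assumes "1 \<le> j" and "eta (j + 1) \<noteq> 0"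
  shows "merge 1 j (monomer_pred j eta) = eta"
  using assms by (auto simp: merge_def monomer_pred_def raise_def lower_def fun_eq_iff)

lemma monomer_pred_unique:
  assumes "1 \<le> j" and "merge 1 j xi = eta" and "trans_rate (psi_BD v) 1 j xi \<noteq> 0"
  shows "eta (j + 1) \<noteq> 0 \<and> xi = monomer_pred j eta"
proof -
  have occupied: "if j = 1 then 2 \<le> xi 1 else 1 \<le> xi 1 \<and> 1 \<le> xi j"
    using assms(1,3) by (auto simp: trans_rate_def psi_BD_def)
  show ?thesis
    using occupied assms(1) unfolding assms(2)[symmetric]
    by (auto simp: merge_def monomer_pred_def raise_def lower_def fun_eq_iff split: if_splits)
qed

lemma monomer_pred_partition:
  assumes eta: "eta \<in> partitions N" and j: "1 \<le> j" and occ: "eta (j + 1) \<noteq> 0"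
  shows "monomer_pred j eta \<in> partitions N"
proof -
  have jN: "j + 1 \<in> {1..N}" using partitions_support[OF eta occ] .
  define z where "z = lower (j + 1) eta"
  obtain e where e: "eta (j + 1) = Suc e" using occ by (cases "eta (j + 1)") auto
  have "z(j + 1 := eta (j + 1)) = eta" by (simp add: z_def lower_def)
  then have "total_mass N z + (j + 1) = total_mass N eta"
    using total_mass_update[OF jN, of z "eta (j + 1)"] e by (simp add: z_def lower_def algebra_simps)
  moreover have "total_mass N (raise 1 z) = total_mass N z + 1" "total_mass N (monomer_pred j eta) = total_mass N (raise 1 z) + j"
    using total_mass_update[of 1 N z "Suc (z 1)"] total_mass_update[of j N "raise 1 z" "Suc (raise 1 z j)"] jN j
    unfolding monomer_pred_def z_def raise_def by auto
  ultimately have "total_mass N (monomer_pred j eta) = N"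
    using eta by (simp add: partitions_def total_mass_def)
  moreover have "monomer_pred j eta k \<noteq> 0 \<Longrightarrow> 1 \<le> k \<and> k \<le> N" for k
    using partitions_support[OF eta, of k] jN j
    by (auto simp: monomer_pred_def raise_def lower_def split: if_splits)
  ultimately show ?thesis by (simp add: partitions_def total_mass_def)
qed

(* Rate of the merge out of the predecessor state; the cases j = 1 and j > 1 agree. *)
lemma rate_monomer_pred:
  assumes "1 \<le> j"
  shows "trans_rate (psi_BD v) 1 j (raise j (raise 1 z))
           = real j * v * real (Suc (raise 1 z j)) * real (Suc (z 1))"
  using assms by (auto simp: trans_rate_def psi_BD_def raise_def algebra_simps)

(* Key identity: the inflow into eta through a (1,j)-merge is j v a_1 a_j times the
   weight of eta with one (j+1)-cluster removed, i.e. a_{j+1}' times that weight. *)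
lemma gibbs_monomer_pred:
  assumes "j \<in> {1..N}"
  shows "trans_rate (psi_BD v) 1 j (raise j (raise 1 z)) * gibbs N a (raise j (raise 1 z))
           = real j * v * a 1 * a j * gibbs N a z"
proof -
  have one: "1 \<in> {1..N}" and "1 \<le> j" using assms by auto
  then have "trans_rate (psi_BD v) 1 j (raise j (raise 1 z)) * gibbs N a (raise j (raise 1 z))
      = real j * v * real (Suc (z 1)) * (real (Suc (raise 1 z j)) * gibbs N a (raise j (raise 1 z)))"
    by (simp only: rate_monomer_pred mult_ac)
  also have "\<dots> = real j * v * a j * (real (Suc (z 1)) * gibbs N a (raise 1 z))"
    by (simp only: gibbs_raise[OF assms] mult_ac)
  also have "\<dots> = real j * v * a 1 * a j * gibbs N a z"
    by (simp only: gibbs_raise[OF one] mult_ac)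
  finally show ?thesis .
qed

lemma sum_split_first:
  fixes f :: "nat \<Rightarrow> 'a::comm_monoid_add"
  assumes "1 \<le> N"
  shows "(\<Sum>i=1..N. f i) = f 1 + (\<Sum>i=2..N. f i)"
  using sum.atLeast_Suc_atMost[OF assms, of f] by (simp add: numeral_2_eq_2)

(* Total jump rate out of eta: n_1 monomers each meet the remaining N-1 particles. *)
lemma outflow_BD:
  assumes eta: "eta \<in> partitions N" and N: "1 \<le> N"
  shows "(\<Sum>i\<in>{1..N}. \<Sum>j\<in>{i..N}. trans_rate (psi_BD v) i j eta) = v * real (eta 1) * (real N - 1)"
proof -
  define S where "S = (\<Sum>j=2..N. real j * real (eta j))"
  have "real (\<Sum>j=1..N. j * eta j) = real N" using eta by (simp add: partitions_def)
  then have "(\<Sum>j=1..N. real j * real (eta j)) = real N" unfolding of_nat_sum of_nat_mult .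
  then have S: "S = real N - real (eta 1)" unfolding S_def sum_split_first[OF N] by simp
  have only_monomers: "(\<Sum>i=2..N. \<Sum>j\<in>{i..N}. trans_rate (psi_BD v) i j eta) = 0"
    by (intro sum.neutral ballI) (auto simp: trans_rate_def psi_BD_def)
  have monomer_rates: "(\<Sum>j=2..N. trans_rate (psi_BD v) 1 j eta) = v * real (eta 1) * S"
    unfolding S_def sum_distrib_left by (intro sum.cong) (auto simp: trans_rate_def psi_BD_def)
  have "(\<Sum>i\<in>{1..N}. \<Sum>j\<in>{i..N}. trans_rate (psi_BD v) i j eta)
      = trans_rate (psi_BD v) 1 1 eta + (\<Sum>j=2..N. trans_rate (psi_BD v) 1 j eta)"
    unfolding sum_split_first[OF N] only_monomers by simp
  also have "\<dots> = v * real (eta 1) * ((real (eta 1) - 1) + S)"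
    unfolding monomer_rates by (simp add: trans_rate_def psi_BD_def field_simps)
  finally show ?thesis unfolding S by simp
qed

lemma inflow_BD:
  assumes eta: "eta \<in> partitions N"
  shows "(\<Sum>xi\<in>partitions N. \<Sum>i\<in>{1..N}. \<Sum>j\<in>{i..N}.
            if merge i j xi = eta then trans_rate (psi_BD v) i j xi * q xi else 0)
       = (\<Sum>j\<in>{1..N}. if eta (j + 1) = 0 then 0
            else trans_rate (psi_BD v) 1 j (monomer_pred j eta) * q (monomer_pred j eta))"
proof -
  let ?h = "\<lambda>xi i j. if merge i j xi = eta then trans_rate (psi_BD v) i j xi * q xi else 0"
  have "(\<Sum>xi\<in>partitions N. \<Sum>i\<in>{1..N}. \<Sum>j\<in>{i..N}. ?h xi i j)
      = (\<Sum>i\<in>{1..N}. \<Sum>j\<in>{i..N}. \<Sum>xi\<in>partitions N. ?h xi i j)"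
    by (subst sum.swap) (rule sum.cong[OF refl], rule sum.swap)
  also have "\<dots> = (\<Sum>j\<in>{1..N}. \<Sum>xi\<in>partitions N. ?h xi 1 j)"
  proof -
    have zero: "(\<Sum>i=2..N. \<Sum>j\<in>{i..N}. \<Sum>xi\<in>partitions N. ?h xi i j) = 0"
      by (intro sum.neutral ballI) (auto simp: trans_rate_def psi_BD_def)
    show ?thesis
    proof (cases "N = 0")
      case False
      then have "1 \<le> N" by simp
      then show ?thesis unfolding sum_split_first[OF \<open>1 \<le> N\<close>] zero by (simp only: add_0_right)
    qed simp
  qed
  also have "\<dots> = (\<Sum>j\<in>{1..N}. if eta (j + 1) = 0 then 0
            else trans_rate (psi_BD v) 1 j (monomer_pred j eta) * q (monomer_pred j eta))"
  proof (rule sum.cong[OF refl])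
    fix j :: nat assume "j \<in> {1..N}"
    then have j: "1 \<le> j" by simp
    have "?h xi 1 j = (if xi = monomer_pred j eta then ?h xi 1 j else 0)" for xi
      using monomer_pred_unique[OF j, of xi eta v] by auto
    then have "(\<Sum>xi\<in>partitions N. ?h xi 1 j)
        = (\<Sum>xi\<in>partitions N. if xi = monomer_pred j eta then ?h xi 1 j else 0)"
      by (rule sum.cong[OF refl])
    also have "\<dots> = (if monomer_pred j eta \<in> partitions N then ?h (monomer_pred j eta) 1 j else 0)"
      using finite_partitions by (rule sum.delta)
    also have "\<dots> = (if eta (j + 1) = 0 then 0
            else trans_rate (psi_BD v) 1 j (monomer_pred j eta) * q (monomer_pred j eta))"
      using monomer_pred_unique[OF j, of "monomer_pred j eta" eta v]
        merge_monomer_pred[OF j] monomer_pred_partition[OF eta j] by (cases "eta (j + 1) = 0") auto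
    finally show "(\<Sum>xi\<in>partitions N. ?h xi 1 j) = \<dots>" .
  qed
  finally show ?thesis .
qed

(* For arbitrary amplitudes a, the forward-equation right-hand side at a Gibbs weight
   has the same shape as the derivative in gibbs_has_derivative, with a' replaced by
   the Becker--Doering field. *)
lemma forward_rhs_gibbs:
  assumes eta: "eta \<in> partitions N" and N: "1 \<le> N"
  shows "forward_rhs N (psi_BD v) (gibbs N a) eta
       = (\<Sum>k=1..N. if eta k = 0 then 0 else bd_field N v a k * gibbs N a (lower k eta))"
proof -
  define T where "T k = (if eta k = 0 then 0 else bd_field N v a k * gibbs N a (lower k eta))" for k
  have inflow: "(\<Sum>j\<in>{1..N}. if eta (j + 1) = 0 then 0
            else trans_rate (psi_BD v) 1 j (monomer_pred j eta) * gibbs N a (monomer_pred j eta))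
      = (\<Sum>j=1..N. T (Suc j))"
  proof (rule sum.cong[OF refl])
    fix j assume j: "j \<in> {1..N}"
    show "(if eta (j + 1) = 0 then 0
            else trans_rate (psi_BD v) 1 j (monomer_pred j eta) * gibbs N a (monomer_pred j eta))
        = T (Suc j)"
      unfolding T_def monomer_pred_def gibbs_monomer_pred[OF j]
      using j by (simp add: bd_field_def mult_ac)
  qed
  have "T (Suc N) = 0" using partitions_support[OF eta, of "Suc N"] by (auto simp: T_def)
  then have shift: "(\<Sum>j=1..N. T (Suc j)) = (\<Sum>k=2..N. T k)"
    by (simp add: sum.shift_bounds_cl_Suc_ivl[symmetric] numeral_2_eq_2)
  have outflow: "v * real (eta 1) * (real N - 1) * gibbs N a eta = - T 1"
  proof (cases "eta 1 = 0")
    case False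
    then have "real (eta 1) * gibbs N a eta = a 1 * gibbs N a (lower 1 eta)"
      using N by (intro gibbs_lower) auto
    then show ?thesis using False by (simp add: T_def bd_field_def algebra_simps)
  qed (simp add: T_def)
  have total: "(\<Sum>k=1..N. if eta k = 0 then 0 else bd_field N v a k * gibbs N a (lower k eta))
      = T 1 + (\<Sum>k=2..N. T k)"
    using sum_split_first[OF N, of T] by (simp add: T_def)
  show ?thesis
    unfolding forward_rhs_def inflow_BD[OF eta] outflow_BD[OF eta N] inflow shift outflow total
    by simp
qed

definition generator :: "nat \<Rightarrow> (nat \<Rightarrow> nat \<Rightarrow> real) \<Rightarrow> (nat \<Rightarrow> nat) \<Rightarrow> (nat \<Rightarrow> nat) \<Rightarrow> real" where
  "generator N psi eta xi =
     (\<Sum>i\<in>{1..N}. \<Sum>j\<in>{i..N}. if merge i j xi = eta then trans_rate psi i j xi else 0)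
     - (if xi = eta then (\<Sum>i\<in>{1..N}. \<Sum>j\<in>{i..N}. trans_rate psi i j eta) else 0)"

lemma forward_rhs_linear:
  assumes "eta \<in> partitions N"
  shows "forward_rhs N psi q eta = (\<Sum>xi\<in>partitions N. generator N psi eta xi * q xi)"
proof -
  let ?out = "\<Sum>i\<in>{1..N}. \<Sum>j\<in>{i..N}. trans_rate psi i j eta"
  have inflow: "(\<Sum>xi\<in>partitions N. (\<Sum>i\<in>{1..N}. \<Sum>j\<in>{i..N}.
                   if merge i j xi = eta then trans_rate psi i j xi else 0) * q xi)
      = (\<Sum>xi\<in>partitions N. \<Sum>i\<in>{1..N}. \<Sum>j\<in>{i..N}.
                   if merge i j xi = eta then trans_rate psi i j xi * q xi else 0)"
    unfolding sum_distrib_right by (intro sum.cong refl) simp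
  have "(\<Sum>xi\<in>partitions N. (if xi = eta then ?out else 0) * q xi)
      = (\<Sum>xi\<in>partitions N. if xi = eta then ?out * q xi else 0)"
    by (intro sum.cong) auto
  also have "\<dots> = ?out * q eta"
    using finite_partitions assms by (simp add: sum.delta')
  finally show ?thesis
    unfolding forward_rhs_def generator_def left_diff_distrib sum_subtractf inflow by simp
qed

lemma gibbs_solves_forward_equation:
  assumes eta: "eta \<in> partitions N" and N: "2 \<le> N"
  shows "((\<lambda>s. fact N * gibbs N (\<lambda>k. acoef N v k s) eta) has_real_derivative
           (\<Sum>xi\<in>partitions N. generator N (psi_BD v) eta xi * (fact N * gibbs N (\<lambda>k. acoef N v k t) xi)))
         (at t within S)"
proof -
  have "((\<lambda>s. gibbs N (\<lambda>k. acoef N v k s) eta) has_real_derivative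
          (\<Sum>k=1..N. if eta k = 0 then 0
             else bd_field N v (\<lambda>k. acoef N v k t) k * gibbs N (\<lambda>k. acoef N v k t) (lower k eta))) (at t)"
    by (rule gibbs_has_derivative) (use N acoef_has_derivative in auto)
  also have "(\<Sum>k=1..N. if eta k = 0 then 0
             else bd_field N v (\<lambda>k. acoef N v k t) k * gibbs N (\<lambda>k. acoef N v k t) (lower k eta))
      = (\<Sum>xi\<in>partitions N. generator N (psi_BD v) eta xi * gibbs N (\<lambda>k. acoef N v k t) xi)"
    using forward_rhs_gibbs[OF eta, where v=v and a="\<lambda>k. acoef N v k t"] forward_rhs_linear[OF eta] N
    by simp
  finally have "((\<lambda>s. fact N * gibbs N (\<lambda>k. acoef N v k s) eta) has_real_derivative
      fact N * (\<Sum>xi\<in>partitions N. generator N (psi_BD v) eta xi * gibbs N (\<lambda>k. acoef N v k t) xi)) (at t)"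
    by (rule DERIV_cmult)
  then show ?thesis
    unfolding sum_distrib_left by (simp add: mult.left_commute has_field_derivative_at_within)
qed

lemma gibbs_initial:
  assumes eta: "eta \<in> partitions N" and N: "2 \<le> N"
  shows "fact N * gibbs N (\<lambda>k. acoef N v k 0) eta = (if eta = (\<lambda>k. if k = 1 then N else 0) then 1 else 0)"
proof (cases "\<exists>k\<in>{2..N}. eta k \<noteq> 0")
  case True
  then obtain k where k: "k \<in> {2..N}" "eta k \<noteq> 0" by blast
  then have "gibbs N (\<lambda>k. acoef N v k 0) eta = 0"
    using gibbs_split[of k N _ eta] acoef_at_zero[of k N v] by auto
  moreover have "eta \<noteq> (\<lambda>k. if k = 1 then N else 0)" using k by auto
  ultimately show ?thesis by simp
next
  case False
  then have no_large: "eta k = 0" if "k \<in> {2..N}" for k using that by blast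
  have split: "(\<Sum>j=1..N. j * eta j) = 1 * eta 1 + (\<Sum>j=2..N. j * eta j)"
    by (rule sum_split_first) (use N in simp)
  have rest: "(\<Sum>j=2..N. j * eta j) = 0"
    using no_large by (intro sum.neutral) auto
  have "(\<Sum>j=1..N. j * eta j) = N" using eta by (simp add: partitions_def)
  then have monomer_count: "eta 1 = N" using split rest by linarith
  have monomers: "eta = (\<lambda>k. if k = 1 then N else 0)"
  proof
    fix k
    have "eta k = 0" if "k \<noteq> 1"
    proof (rule ccontr)
      assume "eta k \<noteq> 0"
      then have "k \<in> {1..N}" by (rule partitions_support[OF eta])
      then have "k \<in> {2..N}" using that by auto
      then show False using no_large \<open>eta k \<noteq> 0\<close> by simp
    qed
    then show "eta k = (if k = 1 then N else 0)" using monomer_count by auto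
  qed
  have "gibbs N (\<lambda>k. acoef N v k 0) eta
      = acoef N v 1 0 ^ eta 1 / fact (eta 1) * (\<Prod>k\<in>{1..N}-{1}. acoef N v k 0 ^ eta k / fact (eta k))"
    by (rule gibbs_split) (use N in auto)
  also have "(\<Prod>k\<in>{1..N}-{1}. acoef N v k 0 ^ eta k / fact (eta k)) = 1"
    by (rule prod.neutral) (use no_large in auto)
  also have "acoef N v 1 0 ^ eta 1 / fact (eta 1) * 1 = 1 / fact N"
    unfolding acoef_one monomer_count by simp
  finally have "gibbs N (\<lambda>k. acoef N v k 0) eta = 1 / fact N" .
  then show ?thesis using monomers by simp
qed

lemma quadratic_form_bound:
  fixes C :: "'a \<Rightarrow> 'a \<Rightarrow> real" and x :: "'a \<Rightarrow> real"
  assumes "finite P" and bound: "\<And>i j. i \<in> P \<Longrightarrow> j \<in> P \<Longrightarrow> \<bar>C i j\<bar> \<le> K"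
  shows "(\<Sum>i\<in>P. x i * (\<Sum>j\<in>P. C i j * x j)) \<le> K * real (card P) * (\<Sum>i\<in>P. (x i)\<^sup>2)"
proof -
  have term_bound: "x i * (C i j * x j) \<le> K / 2 * (x i)\<^sup>2 + K / 2 * (x j)\<^sup>2"
    if "i \<in> P" "j \<in> P" for i j
  proof -
    have "x i * (C i j * x j) \<le> \<bar>x i * (C i j * x j)\<bar>" by (rule abs_ge_self)
    also have "\<dots> = \<bar>C i j\<bar> * \<bar>x i * x j\<bar>" by (simp add: abs_mult)
    also have "\<dots> \<le> K * \<bar>x i * x j\<bar>"
      using bound[OF that] by (intro mult_right_mono) auto
    also have "\<bar>x i * x j\<bar> \<le> ((x i)\<^sup>2 + (x j)\<^sup>2) / 2"
      using sum_squares_bound[of "\<bar>x i\<bar>" "\<bar>x j\<bar>"] by (simp add: abs_mult power2_abs)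
    then have "K * \<bar>x i * x j\<bar> \<le> K * (((x i)\<^sup>2 + (x j)\<^sup>2) / 2)"
      using bound[OF that] by (intro mult_left_mono) auto
    finally show ?thesis by (simp add: field_simps)
  qed
  have "(\<Sum>i\<in>P. x i * (\<Sum>j\<in>P. C i j * x j)) = (\<Sum>i\<in>P. \<Sum>j\<in>P. x i * (C i j * x j))"
    by (simp add: sum_distrib_left)
  also have "\<dots> \<le> (\<Sum>i\<in>P. \<Sum>j\<in>P. K / 2 * (x i)\<^sup>2 + K / 2 * (x j)\<^sup>2)"
    using term_bound by (intro sum_mono) auto
  also have "\<dots> = K * real (card P) * (\<Sum>i\<in>P. (x i)\<^sup>2)"
    by (simp add: sum.distrib sum_distrib_left sum.swap[of _ P P] algebra_simps)
  finally show ?thesis .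
qed

(* Gronwall-type lemma: a nonnegative function vanishing at 0 whose right derivative is
   at most L times itself vanishes on [0, oo), since E(t) exp(-L t) is nonincreasing. *)
lemma zero_under_linear_growth:
  fixes E E' :: "real \<Rightarrow> real"
  assumes E0: "E 0 = 0" and nonneg: "\<And>s. 0 \<le> s \<Longrightarrow> 0 \<le> E s"
    and deriv: "\<And>s. 0 \<le> s \<Longrightarrow> (E has_real_derivative E' s) (at s within {0..})"
    and growth: "\<And>s. 0 \<le> s \<Longrightarrow> E' s \<le> L * E s"
    and t: "0 \<le> t"
  shows "E t = 0"
proof -
  define F where "F s = E s * exp (- L * s)" for s
  have dF: "(F has_real_derivative (E' s - L * E s) * exp (- L * s)) (at s within {0..})"
    if "0 \<le> s" for s
    unfolding F_def using deriv[OF that]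
    by (auto intro!: derivative_eq_intros simp: algebra_simps)
  have "F t \<le> F 0"
  proof (rule DERIV_nonpos_imp_decreasing_open[OF t])
    fix s :: real assume s: "0 < s" "s < t"
    have "at s within {0..} = at s" by (rule at_within_interior) (use s in simp)
    then have "(F has_real_derivative (E' s - L * E s) * exp (- L * s)) (at s)"
      using dF[of s] s by simp
    moreover have "(E' s - L * E s) * exp (- L * s) \<le> 0"
      using growth[of s] s by (simp add: mult_nonpos_nonneg)
    ultimately show "\<exists>y. (F has_real_derivative y) (at s) \<and> y \<le> 0" by blast
  next
    have "continuous (at s within {0..}) F" if "0 \<le> s" for s
      using dF[OF that] by (rule DERIV_continuous)
    then have "continuous_on {0..} F"
      by (simp add: continuous_on_eq_continuous_within)
    then show "continuous_on {0..t} F"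
      by (rule continuous_on_subset) auto
  qed
  then have "E t * exp (- L * t) \<le> 0" by (simp add: F_def E0)
  then show ?thesis using nonneg[OF t] by (simp add: mult_le_0_iff)
qed

(* Uniqueness for finite linear ODE systems on [0, oo): the squared distance of two
   solutions obeys the Gronwall hypothesis. *)
lemma linear_ode_unique:
  fixes p q :: "real \<Rightarrow> 'a \<Rightarrow> real" and C :: "'a \<Rightarrow> 'a \<Rightarrow> real"
  assumes fin: "finite P"
    and init: "\<And>i. i \<in> P \<Longrightarrow> p 0 i = q 0 i"
    and dp: "\<And>i t. i \<in> P \<Longrightarrow> 0 \<le> t \<Longrightarrow>
               ((\<lambda>s. p s i) has_real_derivative (\<Sum>j\<in>P. C i j * p t j)) (at t within {0..})"
    and dq: "\<And>i t. i \<in> P \<Longrightarrow> 0 \<le> t \<Longrightarrow>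
               ((\<lambda>s. q s i) has_real_derivative (\<Sum>j\<in>P. C i j * q t j)) (at t within {0..})"
    and t: "0 \<le> t" and i: "i \<in> P"
  shows "p t i = q t i"
proof -
  define d where "d s j = p s j - q s j" for s j
  define E where "E s = (\<Sum>j\<in>P. (d s j)\<^sup>2)" for s
  define E' where "E' s = (\<Sum>i\<in>P. 2 * d s i * (\<Sum>j\<in>P. C i j * d s j))" for s
  define K where "K = (\<Sum>i\<in>P. \<Sum>j\<in>P. \<bar>C i j\<bar>)"
  have bound: "\<bar>C i j\<bar> \<le> K" if "i \<in> P" "j \<in> P" for i j
  proof -
    have "\<bar>C i j\<bar> \<le> (\<Sum>j\<in>P. \<bar>C i j\<bar>)" using fin that by (intro member_le_sum) auto
    also have "\<dots> \<le> K"
      unfolding K_def using fin that by (intro member_le_sum[of i P "\<lambda>i. \<Sum>j\<in>P. \<bar>C i j\<bar>"] sum_nonneg) auto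
    finally show ?thesis .
  qed
  have dd: "((\<lambda>s. d s i) has_real_derivative (\<Sum>j\<in>P. C i j * d s j)) (at s within {0..})"
    if "i \<in> P" "0 \<le> s" for i s
    using DERIV_diff[OF dp[OF that] dq[OF that]]
    by (simp add: d_def sum_subtractf right_diff_distrib)
  have dE: "(E has_real_derivative E' s) (at s within {0..})" if "0 \<le> s" for s
    unfolding E_def E'_def
    by (rule DERIV_sum, rule DERIV_power[THEN DERIV_cong], rule dd) (use that in auto)
  have "E t = 0"
  proof (rule zero_under_linear_growth[OF _ _ dE _ t])
    show "E 0 = 0" by (simp add: E_def d_def init)
    show "0 \<le> E s" for s by (simp add: E_def sum_nonneg)
    show "E' s \<le> 2 * (K * real (card P)) * E s" for s
    proof -
      have "(\<Sum>i\<in>P. d s i * (\<Sum>j\<in>P. C i j * d s j)) \<le> K * real (card P) * E s"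
        unfolding E_def by (rule quadratic_form_bound) (use fin bound in auto)
      moreover have "E' s = 2 * (\<Sum>i\<in>P. d s i * (\<Sum>j\<in>P. C i j * d s j))"
        unfolding E'_def sum_distrib_left by (simp add: mult.assoc)
      ultimately show ?thesis by simp
    qed
  qed
  then have "(d t i)\<^sup>2 = 0" using fin i by (simp add: E_def sum_nonneg_eq_0_iff)
  then show ?thesis by (simp add: d_def)
qed

theorem mainTheorem8:
  fixes v :: real and N :: nat and p :: "real \<Rightarrow> (nat \<Rightarrow> nat) \<Rightarrow> real"
  assumes "v > 0" and "N \<ge> 2"
    and "is_CP_law N (psi_BD v) p"
  shows "(\<forall>t\<ge>0. \<forall>eta\<in>partitions N.
            p t eta = fact N * (\<Prod>k=1..N. acoef N v k t ^ eta k / fact (eta k)))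
       \<and> mcoef N 0 1 = 0 \<and> mcoef N 1 1 = 1
       \<and> (\<forall>k\<ge>2. \<forall>i. 1 \<le> i \<and> i \<le> k \<longrightarrow>
            mcoef N i k = - (real (k - 1) * mcoef N (i - 1) (k - 1)) / (real i * (real N - 1)))
       \<and> (\<forall>k\<ge>2. mcoef N 0 k = - (\<Sum>i=1..k. mcoef N i k))"
proof -
  have N: "2 \<le> N" by fact
  have law: "p t eta = fact N * gibbs N (\<lambda>k. acoef N v k t) eta"
    if "0 \<le> t" "eta \<in> partitions N" for t eta
  proof (rule linear_ode_unique[where C = "generator N (psi_BD v)", OF finite_partitions _ _ _ that])
    fix eta assume eta: "eta \<in> partitions N"
    show "p 0 eta = fact N * gibbs N (\<lambda>k. acoef N v k 0) eta"
      using assms(3) eta by (simp add: is_CP_law_def gibbs_initial[OF eta N])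
    fix t :: real assume "0 \<le> t"
    then show "((\<lambda>s. p s eta) has_real_derivative
                 (\<Sum>xi\<in>partitions N. generator N (psi_BD v) eta xi * p t xi)) (at t within {0..})"
      using assms(3) eta by (simp add: is_CP_law_def forward_rhs_linear)
    show "((\<lambda>s. fact N * gibbs N (\<lambda>k. acoef N v k s) eta) has_real_derivative
             (\<Sum>xi\<in>partitions N. generator N (psi_BD v) eta xi * (fact N * gibbs N (\<lambda>k. acoef N v k t) xi)))
           (at t within {0..})"
      by (rule gibbs_solves_forward_equation[OF eta N])
  qed
  have constant_term: "mcoef N 0 k = - (\<Sum>i=1..k. mcoef N i k)" if "2 \<le> k" for k
    using mcoef_sum_zero[OF that, of N] by (simp add: sum.atLeast_Suc_atMost)
  show ?thesis
    using law mcoef_recursion constant_term by (auto simp: gibbs_def mcoef_def)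
qed

end
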